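(* Let $G$ be a graph such that (i) $G[N[v]]$ is a unit interval graph for every $v\in V(G)$, and (ii) $G$ has no induced subgraph isomorphic to $C_4\cup K_1$. Let $X$ be the set of vertices $w_1\in V(G)$ for which there exist $w_2,\dots,w_6\in V(G)$ with $G[\{w_1,\dots,w_6\}]\cong\overline{C_6}$. Then $G[X]$ is co-bipartite.
   Context: A unit interval graph is an intersection graph of unit-length intervals on the real line. $C_n$ is the cycle of length $n$, $K_1$ a single vertex, $\cup$ denotes disjoint union, $\overline{H}$ the complement ($\overline{C_6}$ is the triangular prism). A graph is co-bipartite if its complement is bipartite. $N[v]$ is the closed neighborhood. *)

theory Defs
  imports Complex_Main
begin

definition graph :: "'a set \<Rightarrow> ('a \<Rightarrow> 'a \<Rightarrow> bool) \<Rightarrow> bool" where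
  "graph V E \<longleftrightarrow> finite V \<and> (\<forall>u v. E u v \<longrightarrow> u \<in> V \<and> v \<in> V)
     \<and> (\<forall>u v. E u v \<longrightarrow> E v u) \<and> (\<forall>v. \<not> E v v)"

text \<open>Induced subgraph G[S] is given by the vertex set S with E restricted to S.
  G[S] is isomorphic to the graph (W, F).\<close>
definition induced_iso :: "'a set \<Rightarrow> ('a \<Rightarrow> 'a \<Rightarrow> bool) \<Rightarrow> 'b set \<Rightarrow> ('b \<Rightarrow> 'b \<Rightarrow> bool) \<Rightarrow> bool" where
  "induced_iso S E W F \<longleftrightarrow>
     (\<exists>f. bij_betw f S W \<and> (\<forall>u\<in>S. \<forall>v\<in>S. E u v \<longleftrightarrow> F (f u) (f v)))"

definition closed_nbhd :: "'a set \<Rightarrow> ('a \<Rightarrow> 'a \<Rightarrow> bool) \<Rightarrow> 'a \<Rightarrow> 'a set" where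
  "closed_nbhd V E v = insert v {u \<in> V. E v u}"

definition unit_interval_graph :: "'a set \<Rightarrow> ('a \<Rightarrow> 'a \<Rightarrow> bool) \<Rightarrow> bool" where
  "unit_interval_graph S E \<longleftrightarrow>
     (\<exists>f :: 'a \<Rightarrow> real. \<forall>u\<in>S. \<forall>v\<in>S. u \<noteq> v \<longrightarrow>
        (E u v \<longleftrightarrow> {f u .. f u + 1} \<inter> {f v .. f v + 1} \<noteq> {}))"

definition cycle_adj :: "nat \<Rightarrow> nat \<Rightarrow> nat \<Rightarrow> bool" where
  "cycle_adj n i j \<longleftrightarrow> i < n \<and> j < n \<and> i \<noteq> j \<and> (j = (i + 1) mod n \<or> i = (j + 1) mod n)"

definition compl_adj :: "'a set \<Rightarrow> ('a \<Rightarrow> 'a \<Rightarrow> bool) \<Rightarrow> 'a \<Rightarrow> 'a \<Rightarrow> bool" where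
  "compl_adj V E u v \<longleftrightarrow> u \<in> V \<and> v \<in> V \<and> u \<noteq> v \<and> \<not> E u v"

text \<open>C_4 \<union> K_1: vertices 0..4, a 4-cycle on 0..3 and the isolated vertex 4.\<close>
definition C4_K1_adj :: "nat \<Rightarrow> nat \<Rightarrow> bool" where
  "C4_K1_adj i j \<longleftrightarrow> cycle_adj 4 i j"

text \<open>complement of C_6 (triangular prism) on vertices 0..5.\<close>
definition co_C6_adj :: "nat \<Rightarrow> nat \<Rightarrow> bool" where
  "co_C6_adj = compl_adj {0..<6} (cycle_adj 6)"

definition bipartite :: "'a set \<Rightarrow> ('a \<Rightarrow> 'a \<Rightarrow> bool) \<Rightarrow> bool" where
  "bipartite V E \<longleftrightarrow> (\<exists>A B. A \<union> B = V \<and> A \<inter> B = {} \<and>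
     (\<forall>u\<in>A. \<forall>v\<in>A. \<not> E u v) \<and> (\<forall>u\<in>B. \<forall>v\<in>B. \<not> E u v))"

definition co_bipartite :: "'a set \<Rightarrow> ('a \<Rightarrow> 'a \<Rightarrow> bool) \<Rightarrow> bool" where
  "co_bipartite V E \<longleftrightarrow> bipartite V (compl_adj V E)"

end

theory Submission
  imports Defs
begin

text \<open>A unit interval model of a closed neighbourhood N[c] places c and its neighbours on the
  line within distance 1 of c. Three pairwise non-adjacent neighbours of c, or an induced
  4-cycle inside N[c], cannot be placed this way; so G is claw-free and has no wheel W4.
  Now take an induced prism with triangles a1 a2 a3 and b1 b2 b3, ai adjacent to bi. Applying
  claw-freeness, W4-freeness and C4 \<union> K1-freeness to the three induced 4-cycles ai aj bj bi of
  the prism shows that every other vertex is complete to one of the two triangles, and that two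
  vertices complete to the same triangle are adjacent. Hence the whole vertex set, and a fortiori X, is covered by two
  cliques.\<close>

lemma unit_intervals_intersect_iff:
  "{a..a+1} \<inter> {b..b+1} \<noteq> {} \<longleftrightarrow> \<bar>a - b\<bar> \<le> (1::real)"
proof
  assume "{a..a+1} \<inter> {b..b+1} \<noteq> {}"
  then show "\<bar>a - b\<bar> \<le> 1" by auto
next
  assume "\<bar>a - b\<bar> \<le> 1"
  then have "max a b \<in> {a..a+1} \<inter> {b..b+1}" by (auto simp: abs_le_iff max_def)
  then show "{a..a+1} \<inter> {b..b+1} \<noteq> {}" by blast
qed

lemma no_three_far_points_near_centre:
  fixes c p q r :: real
  assumes "\<bar>c - p\<bar> \<le> 1" "\<bar>c - q\<bar> \<le> 1" "\<bar>c - r\<bar> \<le> 1"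
    and "\<not> \<bar>p - q\<bar> \<le> 1" "\<not> \<bar>q - r\<bar> \<le> 1" "\<not> \<bar>p - r\<bar> \<le> 1"
  shows False
proof -
  consider "p \<le> q" "q \<le> r" | "p \<le> r" "r \<le> q" | "q \<le> p" "p \<le> r"
    | "q \<le> r" "r \<le> p" | "r \<le> p" "p \<le> q" | "r \<le> q" "q \<le> p"
    by linarith
  then show False using assms by cases (simp_all add: abs_if split: if_splits)
qed

lemma no_four_cycle_of_near_points:
  fixes a b c d :: real
  assumes "\<bar>a - b\<bar> \<le> 1" "\<bar>b - c\<bar> \<le> 1" "\<bar>c - d\<bar> \<le> 1" "\<bar>d - a\<bar> \<le> 1"
    and "\<not> \<bar>a - c\<bar> \<le> 1" "\<not> \<bar>b - d\<bar> \<le> 1"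
  shows False
proof (cases "a \<le> c")
  case True
  then have "b \<in> {c - 1..a + 1}" "d \<in> {c - 1..a + 1}" "c - a > 1"
    using assms(1-5) by auto
  then show False using assms(6) by auto
next
  case False
  then have "b \<in> {a - 1..c + 1}" "d \<in> {a - 1..c + 1}" "a - c > 1"
    using assms(1-5) by auto
  then show False using assms(6) by auto
qed

lemma graph_symmetric: "graph V E \<Longrightarrow> E u v \<longleftrightarrow> E v u"
  unfolding graph_def by blast

lemma graph_irreflexive: "graph V E \<Longrightarrow> \<not> E u u"
  unfolding graph_def by blast

lemma unit_interval_nbhd_embedding:
  assumes "\<forall>v\<in>V. unit_interval_graph (closed_nbhd V E v) E" "c \<in> V"
  obtains f :: "_ \<Rightarrow> real" where "\<And>u v. u \<in> closed_nbhd V E c \<Longrightarrow> v \<in> closed_nbhd V E c \<Longrightarrow>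
      u \<noteq> v \<Longrightarrow> E u v \<longleftrightarrow> \<bar>f u - f v\<bar> \<le> 1"
  using assms unfolding unit_interval_graph_def unit_intervals_intersect_iff by metis

definition claw_free :: "('a \<Rightarrow> 'a \<Rightarrow> bool) \<Rightarrow> bool" where
  "claw_free E \<longleftrightarrow> (\<forall>c p q r. E c p \<and> E c q \<and> E c r \<and> p \<noteq> q \<and> q \<noteq> r \<and> p \<noteq> r
     \<longrightarrow> E p q \<or> E q r \<or> E p r)"

definition W4_free :: "('a \<Rightarrow> 'a \<Rightarrow> bool) \<Rightarrow> bool" where
  "W4_free E \<longleftrightarrow> (\<forall>w a b c d. E w a \<and> E w b \<and> E w c \<and> E w d
     \<and> E a b \<and> E b c \<and> E c d \<and> E d a \<and> a \<noteq> c \<and> b \<noteq> d \<longrightarrow> E a c \<or> E b d)"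

lemma locally_unit_interval_claw_free:
  assumes G: "graph V E" and U: "\<forall>v\<in>V. unit_interval_graph (closed_nbhd V E v) E"
  shows "claw_free E"
  unfolding claw_free_def
proof (intro allI impI)
  fix c p q r
  assume claw: "E c p \<and> E c q \<and> E c r \<and> p \<noteq> q \<and> q \<noteq> r \<and> p \<noteq> r"
  have "c \<in> V" using G claw unfolding graph_def by blast
  then obtain f :: "_ \<Rightarrow> real" where f: "\<And>u v. u \<in> closed_nbhd V E c \<Longrightarrow>
      v \<in> closed_nbhd V E c \<Longrightarrow> u \<noteq> v \<Longrightarrow> E u v \<longleftrightarrow> \<bar>f u - f v\<bar> \<le> 1"
    using unit_interval_nbhd_embedding[OF U] by blast
  have N: "c \<in> closed_nbhd V E c" "p \<in> closed_nbhd V E c" "q \<in> closed_nbhd V E c"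
    "r \<in> closed_nbhd V E c"
    using claw G unfolding closed_nbhd_def graph_def by auto
  have "c \<noteq> p" "c \<noteq> q" "c \<noteq> r" using claw G unfolding graph_def by auto
  then have near: "\<bar>f c - f p\<bar> \<le> 1" "\<bar>f c - f q\<bar> \<le> 1" "\<bar>f c - f r\<bar> \<le> 1"
    using f[OF N(1)] N claw by auto
  show "E p q \<or> E q r \<or> E p r"
  proof (rule ccontr)
    assume "\<not> (E p q \<or> E q r \<or> E p r)"
    then have "\<not> \<bar>f p - f q\<bar> \<le> 1" "\<not> \<bar>f q - f r\<bar> \<le> 1" "\<not> \<bar>f p - f r\<bar> \<le> 1"
      using f[OF N(2) N(3)] f[OF N(3) N(4)] f[OF N(2) N(4)] claw by auto
    with near show False by (rule no_three_far_points_near_centre)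
  qed
qed

lemma locally_unit_interval_W4_free:
  assumes G: "graph V E" and U: "\<forall>v\<in>V. unit_interval_graph (closed_nbhd V E v) E"
  shows "W4_free E"
  unfolding W4_free_def
proof (intro allI impI)
  fix w a b c d
  assume W: "E w a \<and> E w b \<and> E w c \<and> E w d \<and> E a b \<and> E b c \<and> E c d \<and> E d a
    \<and> a \<noteq> c \<and> b \<noteq> d"
  have "w \<in> V" using G W unfolding graph_def by blast
  then obtain f :: "_ \<Rightarrow> real" where f: "\<And>u v. u \<in> closed_nbhd V E w \<Longrightarrow>
      v \<in> closed_nbhd V E w \<Longrightarrow> u \<noteq> v \<Longrightarrow> E u v \<longleftrightarrow> \<bar>f u - f v\<bar> \<le> 1"
    using unit_interval_nbhd_embedding[OF U] by blast
  have N: "a \<in> closed_nbhd V E w" "b \<in> closed_nbhd V E w" "c \<in> closed_nbhd V E w"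
    "d \<in> closed_nbhd V E w"
    using W G unfolding closed_nbhd_def graph_def by auto
  have "a \<noteq> b" "b \<noteq> c" "c \<noteq> d" "d \<noteq> a" using W G unfolding graph_def by auto
  then have near: "\<bar>f a - f b\<bar> \<le> 1" "\<bar>f b - f c\<bar> \<le> 1" "\<bar>f c - f d\<bar> \<le> 1"
      "\<bar>f d - f a\<bar> \<le> 1"
    using f N W by auto
  show "E a c \<or> E b d"
  proof (rule ccontr)
    assume "\<not> (E a c \<or> E b d)"
    then have "\<not> \<bar>f a - f c\<bar> \<le> 1" "\<not> \<bar>f b - f d\<bar> \<le> 1"
      using f[OF N(1) N(3)] f[OF N(2) N(4)] W by auto
    with near show False by (rule no_four_cycle_of_near_points)
  qed
qed

lemma induced_isoI:
  assumes "bij_betw g W S" "\<And>i j. i \<in> W \<Longrightarrow> j \<in> W \<Longrightarrow> E (g i) (g j) \<longleftrightarrow> F i j"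
  shows "induced_iso S E W F"
  unfolding induced_iso_def
proof (intro exI conjI ballI)
  show "bij_betw (inv_into W g) S W" using assms(1) by (rule bij_betw_inv_into)
  fix u v assume "u \<in> S" "v \<in> S"
  then have "inv_into W g u \<in> W" "inv_into W g v \<in> W"
    "g (inv_into W g u) = u" "g (inv_into W g v) = v"
    using assms(1) by (auto intro: bij_betw_apply bij_betw_inv_into f_inv_into_f
        simp: bij_betw_imp_surj_on)
  then show "E u v \<longleftrightarrow> F (inv_into W g u) (inv_into W g v)" using assms(2) by metis
qed

lemma induced_isoE:
  assumes "induced_iso S E W F"
  obtains g where "bij_betw g W S" "\<And>i j. i \<in> W \<Longrightarrow> j \<in> W \<Longrightarrow> E (g i) (g j) \<longleftrightarrow> F i j"
proof -
  obtain f where f: "bij_betw f S W" "\<forall>u\<in>S. \<forall>v\<in>S. E u v \<longleftrightarrow> F (f u) (f v)"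
    using assms unfolding induced_iso_def by blast
  have "E (inv_into S f i) (inv_into S f j) \<longleftrightarrow> F i j" if "i \<in> W" "j \<in> W" for i j
  proof -
    have "inv_into S f i \<in> S" "inv_into S f j \<in> S"
      "f (inv_into S f i) = i" "f (inv_into S f j) = j"
      using f(1) that by (auto intro: bij_betw_apply bij_betw_inv_into f_inv_into_f
          simp: bij_betw_imp_surj_on)
    then show ?thesis using f(2) by metis
  qed
  then show ?thesis using that bij_betw_inv_into[OF f(1)] by blast
qed

lemma C4_K1_free_dominates_induced_C4:
  assumes no_C4K1: "\<not> (\<exists>S\<subseteq>V. induced_iso S E {0..<5} C4_K1_adj)"
    and G: "graph V E"
    and "{a, b, c, d, w} \<subseteq> V" "distinct [a, b, c, d, w]"
    and "E a b" "E b c" "E c d" "E d a" "\<not> E a c" "\<not> E b d"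
  shows "E w a \<or> E w b \<or> E w c \<or> E w d"
proof (rule ccontr)
  assume isolated: "\<not> (E w a \<or> E w b \<or> E w c \<or> E w d)"
  define g where "g i = [a, b, c, d, w] ! i" for i
  have five: "{0..<5::nat} = {0, 1, 2, 3, 4}" by auto
  have "bij_betw g {0..<5} {a, b, c, d, w}"
    using \<open>distinct [a, b, c, d, w]\<close> unfolding bij_betw_def inj_on_def five
    by (auto simp: g_def)
  moreover have "E (g i) (g j) \<longleftrightarrow> C4_K1_adj i j" if "i \<in> {0..<5}" "j \<in> {0..<5}" for i j
  proof -
    have "E b a" "E c b" "E d c" "E a d" "\<not> E c a" "\<not> E d b"
      "\<not> E a w" "\<not> E b w" "\<not> E c w" "\<not> E d w"
      "\<not> E w a" "\<not> E w b" "\<not> E w c" "\<not> E w d"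
      using assms(5-) isolated graph_symmetric[OF G] by blast+
    note adj = this assms(5-) graph_irreflexive[OF G]
    from that show ?thesis unfolding five
      by (elim insertE emptyE) (simp_all add: g_def C4_K1_adj_def cycle_adj_def adj)
  qed
  ultimately have "induced_iso {a, b, c, d, w} E {0..<5} C4_K1_adj" by (rule induced_isoI)
  with assms(3) no_C4K1 show False by blast
qed

definition complete_to :: "('a \<Rightarrow> 'a \<Rightarrow> bool) \<Rightarrow> 'a set \<Rightarrow> 'a \<Rightarrow> bool" where
  "complete_to E T u \<longleftrightarrow> (\<forall>t\<in>T. t \<noteq> u \<longrightarrow> E u t)"

definition clique :: "('a \<Rightarrow> 'a \<Rightarrow> bool) \<Rightarrow> 'a set \<Rightarrow> bool" where
  "clique E A \<longleftrightarrow> (\<forall>u\<in>A. \<forall>v\<in>A. u \<noteq> v \<longrightarrow> E u v)"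

lemma co_bipartite_if_covered_by_two_cliques:
  assumes "X \<subseteq> A \<union> B" "clique E A" "clique E B"
  shows "co_bipartite X E"
  unfolding co_bipartite_def bipartite_def
proof (intro exI conjI)
  show "\<forall>u\<in>X \<inter> A. \<forall>v\<in>X \<inter> A. \<not> compl_adj X E u v"
    using assms(2) unfolding clique_def compl_adj_def by blast
  show "\<forall>u\<in>X - A. \<forall>v\<in>X - A. \<not> compl_adj X E u v"
    using assms(1,3) unfolding clique_def compl_adj_def by blast
qed auto

locale induced_prism =
  fixes V :: "'a set" and E :: "'a \<Rightarrow> 'a \<Rightarrow> bool" and a1 a2 a3 b1 b2 b3 :: 'a
  assumes graph: "graph V E"
    and claw_free: "claw_free E" and W4_free: "W4_free E"
    and C4_K1_free: "\<not> (\<exists>S\<subseteq>V. induced_iso S E {0..<5} C4_K1_adj)"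
    and prism_in_V: "{a1, a2, a3, b1, b2, b3} \<subseteq> V"
    and prism_distinct: "distinct [a1, a2, a3, b1, b2, b3]"
    and triangles: "E a1 a2" "E a1 a3" "E a2 a3" "E b1 b2" "E b1 b3" "E b2 b3"
    and matching: "E a1 b1" "E a2 b2" "E a3 b3"
    and non_edges: "\<not> E a1 b2" "\<not> E a1 b3" "\<not> E a2 b1" "\<not> E a2 b3" "\<not> E a3 b1" "\<not> E a3 b2"
begin

lemmas adj_sym = graph_symmetric[OF graph]

lemma induced_prism_swap: "induced_prism V E b1 b2 b3 a1 a2 a3"
  using graph claw_free W4_free C4_K1_free prism_in_V prism_distinct triangles matching non_edges
  by unfold_locales (auto simp: adj_sym)

lemma no_claw:
  "E c p \<Longrightarrow> E c q \<Longrightarrow> E c r \<Longrightarrow> p \<noteq> q \<Longrightarrow> q \<noteq> r \<Longrightarrow> p \<noteq> r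
    \<Longrightarrow> E p q \<or> E q r \<or> E p r"
  using claw_free unfolding claw_free_def by blast

lemma no_W4:
  "E w a \<Longrightarrow> E w b \<Longrightarrow> E w c \<Longrightarrow> E w d \<Longrightarrow> E a b \<Longrightarrow> E b c \<Longrightarrow> E c d \<Longrightarrow> E d a
    \<Longrightarrow> a \<noteq> c \<Longrightarrow> b \<noteq> d \<Longrightarrow> E a c \<or> E b d"
  using W4_free unfolding W4_free_def by blast

lemmas dominates_induced_C4 = C4_K1_free_dominates_induced_C4[OF C4_K1_free graph]

lemma outside_complete_to_a_triangle_or_b_triangle:
  assumes "x \<in> V" "x \<notin> {a1, a2, a3, b1, b2, b3}"
  shows "(E x a1 \<and> E x a2 \<and> E x a3) \<or> (E x b1 \<and> E x b2 \<and> E x b3)"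
proof -
  have "a1 \<noteq> x" "a2 \<noteq> x" "a3 \<noteq> x" "b1 \<noteq> x" "b2 \<noteq> x" "b3 \<noteq> x"
    using assms(2) by auto
  note prism = this prism_in_V prism_distinct triangles matching non_edges assms
  have "E x a1 \<or> E x a2 \<or> E x b2 \<or> E x b1" "E x a1 \<or> E x a3 \<or> E x b3 \<or> E x b1"
    "E x a2 \<or> E x a3 \<or> E x b3 \<or> E x b2"
    using dominates_induced_C4[of a1 a2 b2 b1 x] dominates_induced_C4[of a1 a3 b3 b1 x] dominates_induced_C4[of a2 a3 b3 b2 x]
      prism by (auto simp: adj_sym eq_commute)
  moreover have "\<not> (E x a1 \<and> E x a2 \<and> E x b2 \<and> E x b1)"
    "\<not> (E x a1 \<and> E x a3 \<and> E x b3 \<and> E x b1)" "\<not> (E x a2 \<and> E x a3 \<and> E x b3 \<and> E x b2)"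
    using no_W4[of x a1 a2 b2 b1] no_W4[of x a1 a3 b3 b1] no_W4[of x a2 a3 b3 b2]
      prism by (auto simp: adj_sym eq_commute)
  moreover have "E x a1 \<longrightarrow> E x b1 \<or> E x a2" "E x a1 \<longrightarrow> E x b1 \<or> E x a3"
    "E x a2 \<longrightarrow> E x b2 \<or> E x a1" "E x a2 \<longrightarrow> E x b2 \<or> E x a3"
    "E x a3 \<longrightarrow> E x b3 \<or> E x a1" "E x a3 \<longrightarrow> E x b3 \<or> E x a2"
    "E x b1 \<longrightarrow> E x a1 \<or> E x b2" "E x b1 \<longrightarrow> E x a1 \<or> E x b3"
    "E x b2 \<longrightarrow> E x a2 \<or> E x b1" "E x b2 \<longrightarrow> E x a2 \<or> E x b3"
    "E x b3 \<longrightarrow> E x a3 \<or> E x b1" "E x b3 \<longrightarrow> E x a3 \<or> E x b2"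
    using no_claw[of a1 b1 a2 x] no_claw[of a1 b1 a3 x] no_claw[of a2 b2 a1 x]
      no_claw[of a2 b2 a3 x] no_claw[of a3 b3 a1 x] no_claw[of a3 b3 a2 x]
      no_claw[of b1 a1 b2 x] no_claw[of b1 a1 b3 x] no_claw[of b2 a2 b1 x]
      no_claw[of b2 a2 b3 x] no_claw[of b3 a3 b1 x] no_claw[of b3 a3 b2 x]
      prism by (auto simp: adj_sym eq_commute)
  ultimately show ?thesis by sat
qed

lemma common_neighbours_of_a_triangle_adjacent:
  assumes "x \<in> V" "x \<notin> {a1, a2, a3, b1, b2, b3}" "y \<in> V" "y \<notin> {a1, a2, a3, b1, b2, b3}"
    and "x \<noteq> y" "E x a1" "E x a2" "E x a3" "E y a1" "E y a2" "E y a3"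
  shows "E x y"
proof (rule ccontr)
  assume "\<not> E x y"
  have "a1 \<noteq> x" "a2 \<noteq> x" "a3 \<noteq> x" "b1 \<noteq> x" "b2 \<noteq> x" "b3 \<noteq> x"
    "a1 \<noteq> y" "a2 \<noteq> y" "a3 \<noteq> y" "b1 \<noteq> y" "b2 \<noteq> y" "b3 \<noteq> y"
    using assms(2,4) by auto
  note prism = this prism_in_V prism_distinct triangles matching non_edges assms \<open>\<not> E x y\<close>
  have "\<not> (E x b1 \<and> E x b2)" "\<not> (E x b1 \<and> E x b3)" "\<not> (E x b2 \<and> E x b3)"
    "\<not> (E y b1 \<and> E y b2)" "\<not> (E y b1 \<and> E y b3)" "\<not> (E y b2 \<and> E y b3)"
    using no_W4[of x a1 a2 b2 b1] no_W4[of x a1 a3 b3 b1] no_W4[of x a2 a3 b3 b2]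
      no_W4[of y a1 a2 b2 b1] no_W4[of y a1 a3 b3 b1] no_W4[of y a2 a3 b3 b2]
      prism by (auto simp: adj_sym eq_commute)
  moreover have "E x b1 \<or> E y b1" "E x b2 \<or> E y b2" "E x b3 \<or> E y b3"
    using no_claw[of a1 b1 x y] no_claw[of a2 b2 x y] no_claw[of a3 b3 x y]
      prism by (auto simp: adj_sym eq_commute)
  ultimately show False by sat
qed

lemma complete_to_a_triangle_or_b_triangle:
  assumes "u \<in> V"
  shows "complete_to E {a1, a2, a3} u \<or> complete_to E {b1, b2, b3} u"
proof (cases "u \<in> {a1, a2, a3, b1, b2, b3}")
  case True
  then show ?thesis using triangles unfolding complete_to_def by (auto simp: adj_sym)
next
  case False
  then show ?thesis using outside_complete_to_a_triangle_or_b_triangle[OF assms]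
    unfolding complete_to_def by auto
qed

lemma clique_complete_to_a_triangle: "clique E {u \<in> V. complete_to E {a1, a2, a3} u}"
  unfolding clique_def
proof (intro ballI impI)
  fix u v
  assume u: "u \<in> {u \<in> V. complete_to E {a1, a2, a3} u}"
    and v: "v \<in> {u \<in> V. complete_to E {a1, a2, a3} u}" and "u \<noteq> v"
  have not_b: "\<not> complete_to E {a1, a2, a3} b" if "b \<in> {b1, b2, b3}" for b
    using that non_edges prism_distinct unfolding complete_to_def by (auto simp: adj_sym)
  show "E u v"
  proof (cases "u \<in> {a1, a2, a3} \<or> v \<in> {a1, a2, a3}")
    case True
    then show ?thesis using u v \<open>u \<noteq> v\<close> unfolding complete_to_def by (auto simp: adj_sym)
  next
    case False
    have "u \<notin> {b1, b2, b3}" "v \<notin> {b1, b2, b3}" using u v not_b by blast+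
    with False have out: "u \<notin> {a1, a2, a3, b1, b2, b3}" "v \<notin> {a1, a2, a3, b1, b2, b3}"
      by simp_all
    have "E u a1" "E u a2" "E u a3" "E v a1" "E v a2" "E v a3"
      using u v False unfolding complete_to_def by auto
    with u v out \<open>u \<noteq> v\<close> show ?thesis by (simp add: common_neighbours_of_a_triangle_adjacent)
  qed
qed

lemma covered_by_two_cliques: "\<exists>A B. V \<subseteq> A \<union> B \<and> clique E A \<and> clique E B"
proof (intro exI conjI)
  show "V \<subseteq> {u \<in> V. complete_to E {a1, a2, a3} u} \<union> {u \<in> V. complete_to E {b1, b2, b3} u}"
    using complete_to_a_triangle_or_b_triangle by blast
qed (rule clique_complete_to_a_triangle,
    rule induced_prism.clique_complete_to_a_triangle[OF induced_prism_swap])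

end

lemma induced_prism_of_co_C6:
  assumes "graph V E" "claw_free E" "W4_free E"
    and "\<not> (\<exists>S\<subseteq>V. induced_iso S E {0..<5} C4_K1_adj)"
    and "S \<subseteq> V" "induced_iso S E {0..<6} co_C6_adj"
  shows "\<exists>a1 a2 a3 b1 b2 b3. induced_prism V E a1 a2 a3 b1 b2 b3"
proof -
  obtain g where g: "bij_betw g {0..<6} S"
    and gE: "\<And>i j. i \<in> {0..<6} \<Longrightarrow> j \<in> {0..<6} \<Longrightarrow> E (g i) (g j) \<longleftrightarrow> co_C6_adj i j"
    using induced_isoE[OF assms(6)] by blast
  have "g i \<in> V" if "i < 6" for i
    using bij_betw_apply[OF g] that assms(5) by auto
  moreover have "g i \<noteq> g j" if "i < 6" "j < 6" "i \<noteq> j" for i j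
    using g that unfolding bij_betw_def inj_on_def by auto
  moreover have "co_C6_adj i j \<longleftrightarrow> i < 6 \<and> j < 6 \<and> i \<noteq> j \<and> \<not> (j = Suc i mod 6 \<or> i = Suc j mod 6)"
    for i j
    unfolding co_C6_adj_def compl_adj_def cycle_adj_def by auto
  \<comment> \<open>even and odd vertices of the complement of C6 form the triangles; i is matched with i + 3\<close>
  ultimately have "induced_prism V E (g 0) (g 2) (g 4) (g 3) (g 5) (g 1)"
    using assms(1-4) by unfold_locales (auto simp: gE)
  then show ?thesis by blast
qed

theorem mainTheorem16:
  fixes V :: "'a set" and E :: "'a \<Rightarrow> 'a \<Rightarrow> bool" and X :: "'a set"
  assumes G: "graph V E"
    and loc_uig: "\<forall>v\<in>V. unit_interval_graph (closed_nbhd V E v) E"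
    and no_C4K1: "\<not> (\<exists>S\<subseteq>V. induced_iso S E {0..<5} C4_K1_adj)"
    and X_def: "X = {w1 \<in> V. \<exists>w2\<in>V. \<exists>w3\<in>V. \<exists>w4\<in>V. \<exists>w5\<in>V. \<exists>w6\<in>V.
                   induced_iso {w1, w2, w3, w4, w5, w6} E {0..<6} co_C6_adj}"
  shows "co_bipartite X E"
proof (cases "X = {}")
  case True
  then show ?thesis
    by (intro co_bipartite_if_covered_by_two_cliques[of X "{}" "{}"]) (auto simp: clique_def)
next
  case False
  then obtain w1 where "w1 \<in> X" by blast
  then obtain w2 w3 w4 w5 w6 where "{w1, w2, w3, w4, w5, w6} \<subseteq> V"
    and "induced_iso {w1, w2, w3, w4, w5, w6} E {0..<6} co_C6_adj"
    unfolding X_def by blast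
  then have "\<exists>a1 a2 a3 b1 b2 b3. induced_prism V E a1 a2 a3 b1 b2 b3"
    using locally_unit_interval_claw_free[OF G loc_uig] locally_unit_interval_W4_free[OF G loc_uig]
    by (intro induced_prism_of_co_C6[OF G _ _ no_C4K1])
  then obtain a1 a2 a3 b1 b2 b3 where "induced_prism V E a1 a2 a3 b1 b2 b3" by blast
  then obtain A B where cover: "V \<subseteq> A \<union> B" and cliques: "clique E A" "clique E B"
    by (blast dest: induced_prism.covered_by_two_cliques)
  have "X \<subseteq> A \<union> B" using cover X_def by auto
  then show ?thesis using cliques by (rule co_bipartite_if_covered_by_two_cliques)
qed

end
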